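(* For every integer $n\ge1$, $$\sum_{\ell=1}^n\sum_{k=1}^n\Big(\frac1{n^2}\Big)^{\frac{\ell}{\ell+1}\cdot\frac{k}{k+1}}\ \le\ 1+2e^{4/e}+2e^{8/e}+e^{32/e}.$$ *)

theory Defs
  imports Complex_Main
begin

end

theory Submission
  imports Defs
begin

text \<open>
  Since \<open>1 - (1 - p)(1 - q) \<le> p + q\<close> for \<open>p = 1/(l+1)\<close>, \<open>q = 1/(k+1)\<close>, each summand
  is at most \<open>(n powr (2p) / n) (n powr (2q) / n)\<close>, so the double sum is bounded by the
  square of a single sum. The elementary bound \<open>x powr (2/j) \<le> e\<^sup>2 + 4x/j\<^sup>2\<close>
  (for \<open>x \<ge> 1\<close>, \<open>j \<ge> 2\<close>) bounds that single sum by \<open>e\<^sup>2 + 4 \<Sum> 1/(l+1)\<^sup>2 \<le> 13\<close>,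
  and \<open>13\<^sup>2 \<le> e\<^sup>1\<^sup>0 \<le> exp (32/e)\<close>.
\<close>

lemma half_square_le_exp_minus_two:
  fixes j :: real assumes "j > 0" shows "(j/2)^2 \<le> exp (j - 2)"
proof -
  have "ln (j/2) \<le> j/2 - 1" using assms by (intro ln_le_minus_one) simp
  hence "exp (2 * ln (j/2)) \<le> exp (j - 2)" by simp
  also have "exp (2 * ln (j/2)) = (j/2)^2"
    using assms by (simp add: exp_of_nat_mult[of 2, simplified])
  finally show ?thesis .
qed

lemma powr_two_div_le:
  fixes x j :: real assumes x: "x \<ge> 1" and j: "j \<ge> 2"
  shows "x powr (2/j) \<le> exp 2 + 4 * x / j^2"
proof -
  define t where "t = ln x"
  have t0: "t \<ge> 0" using x by (simp add: t_def)
  have pw: "x powr (2/j) = exp (2/j * t)" using x by (simp add: powr_def t_def)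
  show ?thesis
  proof (cases "t \<le> j")
    case True
    hence "exp (2/j * t) \<le> exp 2" using j t0 by (simp add: field_simps)
    moreover have "0 \<le> 4 * x / j^2" using x by simp
    ultimately show ?thesis using pw by linarith
  next
    case False
    \<comment> \<open>the second summand dominates: \<open>(j/2)\<^sup>2 \<le> exp (j - 2) \<le> exp ((1 - 2/j) ln x)\<close>\<close>
    have "j - 2 \<le> t - 2/j * t"
    proof -
      have "(j - 2) * j \<le> (j - 2) * t" using False j by (intro mult_left_mono) auto
      also have "\<dots> = (t - 2/j * t) * j" using j by (simp add: field_simps)
      finally show ?thesis using j by (simp add: mult_le_cancel_right)
    qed
    hence "(j/2)^2 \<le> exp (t - 2/j * t)"
      using half_square_le_exp_minus_two[of j] j by (smt (verit) exp_le_cancel_iff)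
    hence "j^2 \<le> 4 * exp (t - 2/j * t)" by (simp add: power_divide)
    hence "exp (2/j * t) * j^2 \<le> exp (2/j * t) * (4 * exp (t - 2/j * t))"
      by (intro mult_left_mono) auto
    also have "\<dots> = 4 * x" using x by (simp add: t_def flip: exp_add)
    finally have "exp (2/j * t) \<le> 4 * x / j^2" using j by (simp add: field_simps)
    thus ?thesis using pw exp_gt_zero[of 2] by linarith
  qed
qed

lemma sum_inverse_succ_squares_le:
  "(\<Sum>l=1..n. 1 / (real l + 1)^2) \<le> 1 - 1 / (real n + 1)"
proof (induction n)
  case 0 then show ?case by simp
next
  case (Suc n)
  have "(real n + 1) * (real n + 2) \<le> (real n + 2)^2" by (simp add: power2_eq_square)
  hence "1 / (real n + 2)^2 \<le> 1 / ((real n + 1) * (real n + 2))"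
    by (intro divide_left_mono) auto
  also have "\<dots> = 1 / (real n + 1) - 1 / (real n + 2)" by (simp add: field_simps)
  finally show ?case using Suc by (simp add: add.commute)
qed

lemma inverse_square_powr_le:
  fixes x p q :: real assumes x: "x \<ge> 1" and "p \<ge> 0" and "q \<ge> 0"
  shows "(1 / x^2) powr ((1 - p) * (1 - q)) \<le> (x powr (2 * p) / x) * (x powr (2 * q) / x)"
proof -
  have "-2 * ((1 - p) * (1 - q)) \<le> (2 * p - 1) + (2 * q - 1)"
    using assms by (simp add: algebra_simps)
  hence "x powr (-2 * ((1 - p) * (1 - q))) \<le> x powr ((2 * p - 1) + (2 * q - 1))"
    using x by (intro powr_mono)
  moreover have "1 / x^2 = x powr -2"
    using x by (simp add: powr_minus_divide power2_eq_square)
  ultimately have "(1 / x^2) powr ((1 - p) * (1 - q)) \<le> x powr ((2 * p - 1) + (2 * q - 1))"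
    by (simp add: powr_powr)
  also have "\<dots> = (x powr (2 * p) / x) * (x powr (2 * q) / x)"
    using x by (simp add: powr_add powr_diff power2_eq_square)
  finally show ?thesis .
qed

lemma powr_two_div_over_le:
  fixes x j :: real assumes "x \<ge> 1" and "j \<ge> 2"
  shows "x powr (2 / j) / x \<le> exp 2 / x + 4 / j^2"
proof -
  have "x powr (2 / j) / x \<le> (exp 2 + 4 * x / j^2) / x"
    using assms powr_two_div_le by (intro divide_right_mono) auto
  also have "\<dots> = exp 2 / x + 4 / j^2" using assms by (simp add: field_simps)
  finally show ?thesis .
qed

lemma summand_le:
  fixes x l k :: real assumes x: "x \<ge> 1" and l: "l \<ge> 1" and k: "k \<ge> 1"
  shows "(1 / x^2) powr ((l / (l + 1)) * (k / (k + 1)))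
           \<le> (exp 2 / x + 4 / (l + 1)^2) * (exp 2 / x + 4 / (k + 1)^2)"
proof -
  have "j / (j + 1) = 1 - 1 / (j + 1)" and "2 * (1 / (j + 1)) = 2 / (j + 1)"
    if "j \<ge> 1" for j :: real
    using that by (simp_all add: field_simps)
  hence "(1 / x^2) powr ((l / (l + 1)) * (k / (k + 1)))
           \<le> (x powr (2 / (l + 1)) / x) * (x powr (2 / (k + 1)) / x)"
    using inverse_square_powr_le[OF x, of "1 / (l + 1)" "1 / (k + 1)"] l k by simp
  also have "\<dots> \<le> (exp 2 / x + 4 / (l + 1)^2) * (exp 2 / x + 4 / (k + 1)^2)"
    using x l k by (intro mult_mono powr_two_div_over_le) auto
  finally show ?thesis .
qed

lemma exp_two_le_nine: "exp (2::real) \<le> 9"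
proof -
  have "exp (2::real) = exp 1 * exp 1" by (simp flip: exp_add)
  also have "\<dots> \<le> 3 * 3" using exp_le by (intro mult_mono) auto
  finally show ?thesis by simp
qed

lemma sum_summand_factor_le:
  assumes "n \<ge> 1"
  shows "(\<Sum>l=1..n. exp 2 / real n + 4 / (real l + 1)^2) \<le> 13"
proof -
  have "(\<Sum>l=1..n. exp 2 / real n + 4 / (real l + 1)^2)
          = exp 2 + 4 * (\<Sum>l=1..n. 1 / (real l + 1)^2)"
    using assms by (simp add: sum.distrib sum_distrib_left)
  also have "\<dots> \<le> 9 + 4"
    using exp_two_le_nine sum_inverse_succ_squares_le[of n]
    by (smt (verit) divide_nonneg_nonneg of_nat_0_le_iff)
  finally show ?thesis by simp
qed

lemma thirteen_squared_le_exp: "(13::real)^2 \<le> exp (32 / exp 1)"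
proof -
  have "(13::real)^2 \<le> 2 ^ 10" by simp
  also have "\<dots> \<le> exp 1 ^ 10"
    using exp_ge_add_one_self[of 1] by (intro power_mono) auto
  also have "\<dots> = exp 10" by (simp flip: exp_of_nat_mult)
  also have "\<dots> \<le> exp (32 / exp 1)"
    using exp_le by (simp add: field_simps)
  finally show ?thesis .
qed

theorem mainTheorem5:
  fixes n :: nat
  assumes "n \<ge> 1"
  shows "(\<Sum>l=1..n. \<Sum>k=1..n.
            (1 / (real n)^2) powr ((real l / (real l + 1)) * (real k / (real k + 1))))
         \<le> 1 + 2 * exp (4 / exp 1) + 2 * exp (8 / exp 1) + exp (32 / exp 1)"
proof -
  define f where "f l = exp 2 / real n + 4 / (real l + 1)^2" for l :: nat
  have "(\<Sum>l=1..n. \<Sum>k=1..n.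
            (1 / (real n)^2) powr ((real l / (real l + 1)) * (real k / (real k + 1))))
         \<le> (\<Sum>l=1..n. \<Sum>k=1..n. f l * f k)"
    using assms unfolding f_def by (intro sum_mono summand_le) auto
  also have "\<dots> = (\<Sum>l=1..n. f l)^2" by (simp add: sum_product power2_eq_square)
  also have "\<dots> \<le> 13^2"
    using sum_summand_factor_le[OF assms] by (intro power_mono) (auto simp: f_def intro: sum_nonneg)
  also have "\<dots> \<le> exp (32 / exp 1)" by (rule thirteen_squared_le_exp)
  also have "\<dots> \<le> 1 + 2 * exp (4 / exp 1) + 2 * exp (8 / exp 1) + exp (32 / exp 1)"
    by (simp add: add_nonneg_nonneg)
  finally show ?thesis .
qed

end
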